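(* The set of $G\in\mathcal{T}$ such that the group $(\mathbb{N},G)$ is isomorphic to $(\mathbb{Q},+)$ is comeager in $\mathcal{T}$.
   Context: Let $\mathbb{N}^{\mathbb{N}\times\mathbb{N}}$ be the space of functions $\mathbb{N}\times\mathbb{N}\to\mathbb{N}$ with the product of discrete topologies (a Polish space). Let $\mathcal{A}=\{G\in\mathbb{N}^{\mathbb{N}\times\mathbb{N}}: G \text{ is an abelian group operation on } \mathbb{N} \text{ with identity element } 0\}$ and $\mathcal{T}=\{G\in\mathcal{A}: (\mathbb{N},G)\text{ is torsion-free}\}$, with the subspace topology; $\mathcal{T}$ is a Polish space (the space of countably infinite torsion-free abelian groups). Comeager means: complement is a countable union of nowhere dense sets. *)

theory Defs
  imports "HOL-Analysis.Analysis"
begin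

text \<open>The space of binary operations on nat carries the product topology
 (Function_Topology instance for the function type) of the discrete
 topology on nat (nat's metric topology is discrete).\<close>

definition is_abgroup_op :: "(nat \<times> nat \<Rightarrow> nat) \<Rightarrow> bool" where
  "is_abgroup_op G \<longleftrightarrow>
     (\<forall>a b c. G (G (a, b), c) = G (a, G (b, c))) \<and>
     (\<forall>a b. G (a, b) = G (b, a)) \<and>
     (\<forall>a. G (0, a) = a) \<and>
     (\<forall>a. \<exists>b. G (a, b) = 0)"

primrec gmult :: "(nat \<times> nat \<Rightarrow> nat) \<Rightarrow> nat \<Rightarrow> nat \<Rightarrow> nat" where
  "gmult G 0 a = 0"
| "gmult G (Suc n) a = G (a, gmult G n a)"

definition torsion_free_op :: "(nat \<times> nat \<Rightarrow> nat) \<Rightarrow> bool" where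
  "torsion_free_op G \<longleftrightarrow> (\<forall>a n. a \<noteq> 0 \<and> n > 0 \<longrightarrow> gmult G n a \<noteq> 0)"

definition TFAb :: "(nat \<times> nat \<Rightarrow> nat) set" where
  "TFAb = {G. is_abgroup_op G \<and> torsion_free_op G}"

definition nowhere_dense_in :: "'a topology \<Rightarrow> 'a set \<Rightarrow> bool" where
  "nowhere_dense_in X S \<longleftrightarrow> X interior_of (X closure_of S) = {}"

definition comeager_in :: "'a topology \<Rightarrow> 'a set \<Rightarrow> bool" where
  "comeager_in X A \<longleftrightarrow>
     (\<exists>F. countable F \<and> (\<forall>S\<in>F. nowhere_dense_in X S) \<and> topspace X - A = \<Union>F)"

end

(* A torsion-free abelian group is isomorphic to (Q,+) as soon as one fixed nonzero
   element (here 1) is divisible by every n > 0 and every element is commensurable with it.  Each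
   of these countably many conditions defines an open set of operations, so it suffices that the
   operations isomorphic to (Q,+) are dense.  A basic open set fixes finitely many values G(a,b);
   these live in a finitely generated torsion-free group, which has a rational-valued homomorphism
   separating any finitely many of its elements (built one generator at a time).  Extending such
   a map, injective on the finitely many relevant points, to a bijection N -> Q and transporting
   the addition of Q gives an operation isomorphic to (Q,+) that agrees with G on the fixed pairs. *)

theory Submission
  imports Defs "HOL-Algebra.FiniteProduct"
begin

section \<open>Rational-valued homomorphisms on finitely generated torsion-free groups\<close>

locale torsion_free_comm_group = comm_group +
  assumes pow_ne_one: "\<lbrakk>a \<in> carrier G; a \<noteq> \<one>; n \<noteq> (0::int)\<rbrakk> \<Longrightarrow> a [^] n \<noteq> \<one>"

context comm_group
begin

definition lincomb :: "'a set \<Rightarrow> ('a \<Rightarrow> int) \<Rightarrow> 'a" where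
  "lincomb S c = finprod G (\<lambda>x. x [^] c x) S"

lemma lincomb_closed [intro, simp]: "S \<subseteq> carrier G \<Longrightarrow> lincomb S c \<in> carrier G"
  unfolding lincomb_def by (intro finprod_closed) auto

lemma lincomb_insert:
  "\<lbrakk>finite S; h \<notin> S; insert h S \<subseteq> carrier G\<rbrakk> \<Longrightarrow> lincomb (insert h S) c = h [^] c h \<otimes> lincomb S c"
  unfolding lincomb_def by (subst finprod_insert) auto

lemma lincomb_add:
  "S \<subseteq> carrier G \<Longrightarrow> lincomb S (\<lambda>x. c x + d x) = lincomb S c \<otimes> lincomb S d"
  unfolding lincomb_def by (subst finprod_multf[symmetric]) (auto simp: int_pow_mult intro!: finprod_cong')

lemma lincomb_scale:
  assumes "finite S" "S \<subseteq> carrier G"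
  shows "lincomb S (\<lambda>x. m * c x) = lincomb S c [^] m"
  using assms
proof (induction S rule: finite_induct)
  case empty then show ?case by (simp add: lincomb_def)
next
  case (insert h S)
  then show ?case
    by (simp add: lincomb_insert int_pow_distrib int_pow_pow mult.commute)
qed

lemma lincomb_diff:
  assumes "finite S" "S \<subseteq> carrier G"
  shows "lincomb S (\<lambda>x. c x - d x) = lincomb S c \<otimes> inv (lincomb S d)"
  using lincomb_add[OF assms(2), of c "\<lambda>x. (-1) * d x"] lincomb_scale[OF assms, of "-1" d] assms(2)
  by (simp add: int_pow_neg)

lemma lincomb_single:
  assumes "finite S" "S \<subseteq> carrier G" "a \<in> S"
  shows "lincomb S (\<lambda>x. if x = a then 1 else 0) = a"
proof -
  have "a \<in> carrier G" using assms by blast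
  then show ?thesis
    unfolding lincomb_def using finprod_singleton[of a S "\<lambda>x. x"] assms
    by (auto simp: if_distrib eq_commute[of a] cong: if_cong)
qed

end

definition ratcomb :: "'a set \<Rightarrow> ('a \<Rightarrow> int) \<Rightarrow> ('a \<Rightarrow> rat) \<Rightarrow> rat" where
  "ratcomb S c v = (\<Sum>x\<in>S. of_int (c x) * v x)"

lemma ratcomb_insert:
  "\<lbrakk>finite S; h \<notin> S\<rbrakk> \<Longrightarrow> ratcomb (insert h S) c v = of_int (c h) * v h + ratcomb S c v"
  by (simp add: ratcomb_def)

lemma ratcomb_add: "ratcomb S (\<lambda>x. c x + d x) v = ratcomb S c v + ratcomb S d v"
  by (simp add: ratcomb_def sum.distrib distrib_right)

lemma ratcomb_scale: "ratcomb S (\<lambda>x. m * c x) v = of_int m * ratcomb S c v"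
  by (simp add: ratcomb_def sum_distrib_left mult.assoc)

lemma ratcomb_diff: "ratcomb S (\<lambda>x. c x - d x) v = ratcomb S c v - ratcomb S d v"
  by (simp add: ratcomb_def sum_subtractf left_diff_distrib)

lemma ratcomb_combine: "ratcomb S c (\<lambda>x. v x + t * w x) = ratcomb S c v + t * ratcomb S c w"
  by (simp add: ratcomb_def sum.distrib sum_distrib_left algebra_simps)

lemma ratcomb_update: "h \<notin> S \<Longrightarrow> ratcomb S c (v(h := t)) = ratcomb S c v"
  unfolding ratcomb_def by (rule sum.cong) auto

lemma ratcomb_single:
  assumes "finite S" "a \<in> S"
  shows "ratcomb S (\<lambda>x. if x = a then 1 else 0) v = v a"
proof -
  have "(\<Sum>x\<in>S. of_int (if x = a then 1 else 0) * v x) = (\<Sum>x\<in>S. if x = a then v x else 0)"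
    by (rule sum.cong) auto
  then show ?thesis using assms by (simp add: ratcomb_def)
qed

lemma ratcomb_insert_update:
  fixes m :: int
  assumes "finite S" "h \<notin> S" "m \<noteq> 0"
  shows "ratcomb (insert h S) a (v(h := ratcomb S b v / of_int m))
    = ratcomb S (\<lambda>x. a h * b x + m * a x) v / of_int m"
  using assms by (simp add: ratcomb_insert ratcomb_update ratcomb_add ratcomb_scale field_simps)

lemma (in comm_group) lincomb_insert_power:
  assumes "finite S" "h \<notin> S" "S \<subseteq> carrier G" "h \<in> carrier G" "h [^] (m::int) = lincomb S b"
  shows "lincomb S (\<lambda>x. a h * b x + m * a x) = lincomb (insert h S) a [^] m"
proof -
  have "lincomb S (\<lambda>x. a h * b x + m * a x) = lincomb S b [^] a h \<otimes> lincomb S a [^] m"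
    using assms by (simp add: lincomb_add lincomb_scale)
  also have "\<dots> = (h [^] a h \<otimes> lincomb S a) [^] m"
    using assms by (simp add: assms(5)[symmetric] int_pow_distrib int_pow_pow mult.commute)
  finally show ?thesis using assms by (simp add: lincomb_insert)
qed

lemma (in comm_group) lincomb_insert_eq_one_coeff:
  assumes "finite S" "h \<notin> S" "insert h S \<subseteq> carrier G"
    and "lincomb (insert h S) a = \<one>" and "a h \<noteq> 0"
  shows "\<exists>m b. m \<noteq> (0::int) \<and> h [^] m = lincomb S b"
proof -
  have "inv (lincomb S a) = h [^] a h"
    using assms by (intro inv_equality) (simp_all add: lincomb_insert)
  then have "h [^] a h = lincomb S (\<lambda>x. (-1) * a x)"
    using lincomb_scale[OF assms(1), of "-1" a] assms(3) by (simp add: int_pow_neg)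
  then show ?thesis using assms(5) by blast
qed

definition (in comm_group) extends_to_rat_hom :: "'a set \<Rightarrow> ('a \<Rightarrow> rat) \<Rightarrow> bool" where
  "extends_to_rat_hom S v \<longleftrightarrow> (\<forall>c. lincomb S c = \<one> \<longrightarrow> ratcomb S c v = 0)"

context torsion_free_comm_group
begin

lemma ex_rat_hom_nonvanishing:
  assumes "finite S" "S \<subseteq> carrier G" "lincomb S c \<noteq> \<one>"
  shows "\<exists>v. extends_to_rat_hom S v \<and> ratcomb S c v \<noteq> 0"
  using assms
proof (induction S arbitrary: c rule: finite_induct)
  case empty
  then show ?case by (simp add: lincomb_def)
next
  case (insert h S)
  have h: "h \<in> carrier G" and S: "S \<subseteq> carrier G" using insert.prems by auto
  have split: "lincomb (insert h S) a = h [^] a h \<otimes> lincomb S a" for a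
    using insert.hyps insert.prems by (simp add: lincomb_insert)
  have rsplit: "ratcomb (insert h S) a w = of_int (a h) * w h + ratcomb S a w" for a w
    using insert.hyps by (simp add: ratcomb_insert)
  show ?case
  proof (cases "\<exists>m b. m \<noteq> (0::int) \<and> h [^] m = lincomb S b")
    case True
    then obtain m :: int and b where m: "m \<noteq> 0" and b: "h [^] m = lincomb S b" by blast
    note lc = lincomb_insert_power[OF insert.hyps S h b]
    have "lincomb S (\<lambda>x. c h * b x + m * c x) \<noteq> \<one>"
      using lc pow_ne_one[OF _ insert.prems(2) m] h S by simp
    then obtain v where v: "extends_to_rat_hom S v" "ratcomb S (\<lambda>x. c h * b x + m * c x) v \<noteq> 0"
      using insert.IH[OF S] by blast
    note rc = ratcomb_insert_update[OF insert.hyps m]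
    have "extends_to_rat_hom (insert h S) (v(h := ratcomb S b v / of_int m))"
      using v(1) by (simp add: extends_to_rat_hom_def rc lc)
    moreover have "ratcomb (insert h S) c (v(h := ratcomb S b v / of_int m)) \<noteq> 0"
      using v(2) m by (simp add: rc)
    ultimately show ?thesis by blast
  next
    case False
    then have no_h: "a h = 0" if "lincomb (insert h S) a = \<one>" for a
      using that lincomb_insert_eq_one_coeff[OF insert.hyps insert.prems(1)] by blast
    show ?thesis
    proof (cases "c h = 0")
      case False
      define v where "v = (\<lambda>x. if x = h then 1 else 0 :: rat)"
      have rv: "ratcomb (insert h S) a v = of_int (a h)" for a
      proof -
        have "ratcomb S a v = 0"
          unfolding ratcomb_def v_def using insert.hyps(2) by (intro sum.neutral) auto
        then show ?thesis by (simp add: rsplit v_def)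
      qed
      have "extends_to_rat_hom (insert h S) v" using no_h by (simp add: extends_to_rat_hom_def rv)
      moreover have "ratcomb (insert h S) c v \<noteq> 0" using False by (simp add: rv)
      ultimately show ?thesis by blast
    next
      case True
      then have "lincomb S c \<noteq> \<one>" using insert.prems(2) S by (simp add: split)
      then obtain v where v: "extends_to_rat_hom S v" "ratcomb S c v \<noteq> 0"
        using insert.IH[OF S] by blast
      have rv: "ratcomb (insert h S) a (v(h := 0)) = ratcomb S a v" for a
        using insert.hyps by (simp add: rsplit ratcomb_update)
      have "lincomb S a = \<one>" if "lincomb (insert h S) a = \<one>" for a
        using that no_h[OF that] S by (simp add: split)
      then have "extends_to_rat_hom (insert h S) (v(h := 0))"
        using v(1) by (simp add: extends_to_rat_hom_def rv)
      moreover have "ratcomb (insert h S) c (v(h := 0)) \<noteq> 0" using v(2) by (simp add: rv)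
      ultimately show ?thesis by blast
    qed
  qed
qed

lemma ex_rat_hom_nonvanishing_finite:
  assumes "finite S" "S \<subseteq> carrier G" "finite C" "\<And>c. c \<in> C \<Longrightarrow> lincomb S c \<noteq> \<one>"
  shows "\<exists>v. extends_to_rat_hom S v \<and> (\<forall>c\<in>C. ratcomb S c v \<noteq> 0)"
  using assms(3,4)
proof (induction C rule: finite_induct)
  case empty
  have "extends_to_rat_hom S (\<lambda>_. 0)" by (simp add: extends_to_rat_hom_def ratcomb_def)
  then show ?case by blast
next
  case (insert c0 C)
  obtain v where v: "extends_to_rat_hom S v" "\<forall>c\<in>C. ratcomb S c v \<noteq> 0"
    using insert by auto
  obtain w where w: "extends_to_rat_hom S w" "ratcomb S c0 w \<noteq> 0"
    using ex_rat_hom_nonvanishing[OF assms(1,2)] insert.prems by blast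
  \<comment> \<open>Each \<open>c\<close> rules out at most one \<open>t\<close> for the combination \<open>v + t w\<close>.\<close>
  define bad where "bad c = {t. ratcomb S c v + t * ratcomb S c w = 0}" for c
  have "finite (bad c)" if "c \<in> insert c0 C" for c
  proof (cases "ratcomb S c w = 0")
    case True
    then show ?thesis using that v(2) w(2) by (auto simp: bad_def)
  next
    case False
    then have "bad c \<subseteq> {- ratcomb S c v / ratcomb S c w}" by (auto simp: bad_def field_simps)
    then show ?thesis using finite_subset by blast
  qed
  then have "finite (\<Union>c\<in>insert c0 C. bad c)" using insert.hyps(1) by blast
  then obtain t :: rat where t: "t \<notin> (\<Union>c\<in>insert c0 C. bad c)"
    using ex_new_if_finite[OF infinite_UNIV_char_0] by blast
  have "extends_to_rat_hom S (\<lambda>x. v x + t * w x)"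
    using v(1) w(1) by (simp add: extends_to_rat_hom_def ratcomb_combine)
  moreover have "\<forall>c\<in>insert c0 C. ratcomb S c (\<lambda>x. v x + t * w x) \<noteq> 0"
    using t by (auto simp: ratcomb_combine bad_def)
  ultimately show ?case by blast
qed

lemma ex_rat_partial_embedding:
  assumes "finite S" "S \<subseteq> carrier G"
  shows "\<exists>g :: 'a \<Rightarrow> rat. inj_on g S \<and> (\<forall>x\<in>S. \<forall>y\<in>S. x \<otimes> y \<in> S \<longrightarrow> g (x \<otimes> y) = g x + g y)"
proof -
  define \<delta> :: "'a \<Rightarrow> 'a \<Rightarrow> int" where "\<delta> a = (\<lambda>x. if x = a then 1 else 0 :: int)" for a
  have l\<delta>: "lincomb S (\<delta> a) = a" if "a \<in> S" for a
    using lincomb_single[OF assms that] by (simp add: \<delta>_def)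
  have r\<delta>: "ratcomb S (\<delta> a) v = v a" if "a \<in> S" for a v
    using ratcomb_single[OF assms(1) that] by (simp add: \<delta>_def)
  define C where "C = (\<lambda>(x, y) z. \<delta> x z - \<delta> y z) ` {(x, y) \<in> S \<times> S. x \<noteq> y}"
  have "finite {(x, y) \<in> S \<times> S. x \<noteq> y}"
    using assms(1) by (simp add: finite_subset[of _ "S \<times> S"] subset_iff)
  then have "finite C" by (simp add: C_def)
  moreover have "lincomb S c \<noteq> \<one>" if "c \<in> C" for c
  proof -
    obtain x y where xy: "x \<in> S" "y \<in> S" "x \<noteq> y" and c: "c = (\<lambda>z. \<delta> x z - \<delta> y z)"
      using \<open>c \<in> C\<close> by (auto simp: C_def)
    have xy': "x \<in> carrier G" "y \<in> carrier G" using xy assms(2) by auto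
    have "x \<otimes> inv y \<noteq> \<one>"
    proof
      assume "x \<otimes> inv y = \<one>"
      then have "inv (inv y) = x" using xy' by (intro inv_equality) auto
      with xy' xy(3) show False by simp
    qed
    then show ?thesis using xy by (simp add: c lincomb_diff[OF assms] l\<delta>)
  qed
  ultimately obtain v where v: "extends_to_rat_hom S v" "\<forall>c\<in>C. ratcomb S c v \<noteq> 0"
    using ex_rat_hom_nonvanishing_finite[OF assms] by blast
  have "inj_on v S"
  proof (rule inj_onI, rule ccontr)
    fix x y assume xy: "x \<in> S" "y \<in> S" "v x = v y" "x \<noteq> y"
    then have "(\<lambda>z. \<delta> x z - \<delta> y z) \<in> C" by (auto simp: C_def)
    with v(2) xy show False by (auto simp: ratcomb_diff r\<delta>)
  qed
  moreover have "v (x \<otimes> y) = v x + v y" if "x \<in> S" "y \<in> S" "x \<otimes> y \<in> S" for x y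
  proof -
    have xy: "x \<in> carrier G" "y \<in> carrier G" using that assms(2) by auto
    have "lincomb S (\<lambda>z. \<delta> (x \<otimes> y) z - \<delta> x z - \<delta> y z) = x \<otimes> y \<otimes> inv x \<otimes> inv y"
      using that by (simp add: lincomb_diff[OF assms] l\<delta>)
    also have "\<dots> = \<one>" using xy by (simp add: m_comm[of x y] m_assoc)
    finally have "ratcomb S (\<lambda>z. \<delta> (x \<otimes> y) z - \<delta> x z - \<delta> y z) v = 0"
      using v(1) by (simp add: extends_to_rat_hom_def)
    then show ?thesis using that by (simp add: ratcomb_diff r\<delta>)
  qed
  ultimately show ?thesis by blast
qed

end

section \<open>Divisible torsion-free groups of rank one\<close>

context torsion_free_comm_group
begin

lemma int_pow_eq_imp_eq:
  assumes "e \<in> carrier G" "e \<noteq> \<one>" "e [^] (k::int) = e [^] (l::int)"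
  shows "k = l"
proof (rule ccontr)
  assume "k \<noteq> l"
  have "e [^] (k - l) = \<one>" using assms by (simp add: int_pow_diff)
  with pow_ne_one[OF assms(1,2)] \<open>k \<noteq> l\<close> show False by simp
qed

end

locale rational_group = torsion_free_comm_group +
  fixes e :: 'a
  assumes e_closed [simp]: "e \<in> carrier G" and e_ne_one: "e \<noteq> \<one>"
    and e_divisible: "\<And>n::nat. n > 0 \<Longrightarrow> \<exists>y\<in>carrier G. y [^] n = e"
    and commensurable: "\<And>x. x \<in> carrier G \<Longrightarrow> \<exists>n::nat. n > 0 \<and> (\<exists>k::int. x [^] int n = e [^] k)"
begin

definition coord :: "'a \<Rightarrow> rat" where
  "coord x = (SOME q. \<exists>n::nat. \<exists>k::int. n > 0 \<and> x [^] int n = e [^] k \<and> q = of_int k / of_nat n)"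

lemma coord_eq:
  assumes x: "x \<in> carrier G" and "n > 0" and xn: "x [^] int n = e [^] k"
  shows "coord x = of_int k / of_nat n"
proof -
  have "\<exists>n'::nat. \<exists>k'::int. n' > 0 \<and> x [^] int n' = e [^] k' \<and> coord x = of_int k' / of_nat n'"
    unfolding coord_def by (rule someI_ex) (use assms in blast)
  then obtain n' k' where n': "n' > 0" "x [^] int n' = e [^] k'" "coord x = of_int k' / of_nat n'"
    by blast
  have "e [^] (k * int n') = (x [^] int n) [^] int n'" by (simp add: xn int_pow_pow)
  also have "\<dots> = (x [^] int n') [^] int n" using x by (simp add: int_pow_pow mult.commute)
  also have "\<dots> = e [^] (k' * int n)" by (simp add: n'(2) int_pow_pow)
  finally have "k * int n' = k' * int n" by (rule int_pow_eq_imp_eq[OF e_closed e_ne_one])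
  then have "(of_int (k * int n') :: rat) = of_int (k' * int n)" by (simp only:)
  then have "(of_int k :: rat) * of_nat n' = of_int k' * of_nat n" by simp
  then show ?thesis unfolding n'(3) using n'(1) \<open>n > 0\<close> by (simp add: frac_eq_eq)
qed

lemma coord_mult:
  assumes x: "x \<in> carrier G" and y: "y \<in> carrier G"
  shows "coord (x \<otimes> y) = coord x + coord y"
proof -
  obtain n and k :: int where n: "n > 0" "x [^] int n = e [^] k" using commensurable[OF x] by blast
  obtain n' and k' :: int where n': "n' > 0" "y [^] int n' = e [^] k'" using commensurable[OF y] by blast
  have "(x \<otimes> y) [^] int (n * n') = (x [^] int n) [^] int n' \<otimes> (y [^] int n') [^] int n"
    using x y by (simp add: int_pow_distrib int_pow_pow mult.commute)
  also have "\<dots> = e [^] (k * int n' + k' * int n)"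
    by (simp add: n(2) n'(2) int_pow_pow int_pow_mult)
  finally have "coord (x \<otimes> y) = of_int (k * int n' + k' * int n) / of_nat (n * n')"
    using x y n n' by (intro coord_eq) simp_all
  also have "\<dots> = of_int k / of_nat n + of_int k' / of_nat n'"
    using n n' by (simp add: field_simps)
  also have "\<dots> = coord x + coord y" using coord_eq x y n n' by simp
  finally show ?thesis .
qed

lemma coord_one: "coord \<one> = 0"
  using coord_eq[of \<one> 1 0] by simp

lemma coord_eq_0_imp:
  assumes x: "x \<in> carrier G" and "coord x = 0"
  shows "x = \<one>"
proof -
  obtain n and k :: int where n: "n > 0" "x [^] int n = e [^] k" using commensurable[OF x] by blast
  have "of_int k / of_nat n = (0::rat)" using coord_eq[OF x n] \<open>coord x = 0\<close> by simp
  then have "x [^] int n = \<one>" using n by simp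
  moreover have "int n \<noteq> 0" using n(1) by simp
  ultimately show ?thesis using pow_ne_one[OF x] by blast
qed

lemma inj_on_coord: "inj_on coord (carrier G)"
proof (rule inj_onI)
  fix x y assume xy: "x \<in> carrier G" "y \<in> carrier G" "coord x = coord y"
  have "coord (x \<otimes> inv y) = coord (y \<otimes> inv y)"
    using xy coord_mult[of x "inv y"] coord_mult[of y "inv y"] by simp
  also have "\<dots> = 0" using xy by (simp add: coord_one)
  finally have "coord (x \<otimes> inv y) = 0" .
  then have "x \<otimes> inv y = \<one>" using xy by (intro coord_eq_0_imp) simp_all
  then have "inv (inv y) = x" using xy by (intro inv_equality) auto
  then show "x = y" using xy by simp
qed

lemma coord_surj: "coord ` carrier G = UNIV"
proof -
  have "q \<in> coord ` carrier G" for q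
  proof -
    obtain a b where ab: "quotient_of q = (a, b)" by (cases "quotient_of q")
    then have b: "b > 0" and q: "q = of_int a / of_int b"
      using quotient_of_denom_pos quotient_of_div by blast+
    obtain y where y: "y \<in> carrier G" "y [^] nat b = e" using e_divisible[of "nat b"] b by auto
    have "(y [^] a) [^] int (nat b) = (y [^] int (nat b)) [^] a"
      using y(1) by (simp add: int_pow_pow mult.commute)
    also have "\<dots> = e [^] a" using y(2) by (simp only: int_pow_int)
    finally have "coord (y [^] a) = of_int a / of_nat (nat b)"
      using y(1) b by (intro coord_eq) simp_all
    then show ?thesis using q b y(1) by (intro rev_image_eqI[of "y [^] a"]) simp_all
  qed
  then show ?thesis by blast
qed

lemma bij_betw_coord: "bij_betw coord (carrier G) (UNIV :: rat set)"
  by (simp add: bij_betw_def inj_on_coord coord_surj)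

end

section \<open>Group operations on the natural numbers\<close>

type_synonym binop = "nat \<times> nat \<Rightarrow> nat"

definition op_group :: "binop \<Rightarrow> nat monoid" where
  "op_group G = \<lparr>carrier = UNIV, mult = (\<lambda>a b. G (a, b)), one = 0\<rparr>"

lemma op_group_simps:
  "carrier (op_group G) = UNIV" "a \<otimes>\<^bsub>op_group G\<^esub> b = G (a, b)" "\<one>\<^bsub>op_group G\<^esub> = 0"
  by (simp_all add: op_group_def)

lemma comm_group_op_group: "is_abgroup_op G \<Longrightarrow> comm_group (op_group G)"
proof (rule comm_groupI)
  fix x assume "is_abgroup_op G"
  then obtain b where "G (b, x) = 0" unfolding is_abgroup_op_def by metis
  then show "\<exists>y\<in>carrier (op_group G). y \<otimes>\<^bsub>op_group G\<^esub> x = \<one>\<^bsub>op_group G\<^esub>"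
    by (auto simp: op_group_simps)
qed (auto simp: is_abgroup_op_def op_group_simps)

lemma gmult_eq_pow:
  assumes "is_abgroup_op G" shows "gmult G n a = a [^]\<^bsub>op_group G\<^esub> n"
  by (induction n) (use assms in \<open>auto simp: is_abgroup_op_def op_group_simps\<close>)

lemma torsion_free_op_group:
  assumes "G \<in> TFAb" shows "torsion_free_comm_group (op_group G)"
proof -
  have ab: "is_abgroup_op G" and tf: "torsion_free_op G" using assms by (auto simp: TFAb_def)
  interpret comm_group "op_group G" using comm_group_op_group[OF ab] .
  have nat_pow: "a [^]\<^bsub>op_group G\<^esub> m \<noteq> \<one>\<^bsub>op_group G\<^esub>" if "a \<noteq> \<one>\<^bsub>op_group G\<^esub>" "m > 0" for a and m :: nat
    using tf that by (auto simp: torsion_free_op_def gmult_eq_pow[OF ab] op_group_simps)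
  show ?thesis
  proof
    fix a and n :: int
    assume a: "a \<in> carrier (op_group G)" "a \<noteq> \<one>\<^bsub>op_group G\<^esub>" "n \<noteq> 0"
    show "a [^]\<^bsub>op_group G\<^esub> n \<noteq> \<one>\<^bsub>op_group G\<^esub>"
    proof
      assume "a [^]\<^bsub>op_group G\<^esub> n = \<one>\<^bsub>op_group G\<^esub>"
      then have "a [^]\<^bsub>op_group G\<^esub> int (nat \<bar>n\<bar>) = \<one>\<^bsub>op_group G\<^esub>"
        using a(1) by (cases "n \<ge> 0") (simp_all add: int_pow_neg)
      then show False using nat_pow[OF a(2), of "nat \<bar>n\<bar>"] a(3) by (simp add: int_pow_int)
    qed
  qed
qed

definition rational_ops :: "binop set" where
  "rational_ops = {G \<in> TFAb. \<exists>f :: nat \<Rightarrow> rat. bij f \<and> (\<forall>a b. f (G (a, b)) = f a + f b)}"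

definition one_divisible_by :: "nat \<Rightarrow> binop set" where
  "one_divisible_by n = {G. \<exists>b. gmult G n b = 1}"

\<comment> \<open>Here \<open>1\<close> is merely some fixed nonzero element; the disjunction says \<open>n x = \<plusminus>m 1\<close>.\<close>
definition commensurable_with_one :: "nat \<Rightarrow> binop set" where
  "commensurable_with_one x =
     {G. \<exists>n>0. \<exists>m. gmult G n x = gmult G m 1 \<or> G (gmult G n x, gmult G m 1) = 0}"

lemma additive_rat_gmult:
  assumes "is_abgroup_op G" "\<forall>a b. f (G (a, b)) = f a + (f b :: rat)"
  shows "f 0 = 0" "f (gmult G n a) = of_nat n * f a"
proof -
  have "f 0 = f (G (0, 0))" using assms(1) by (simp add: is_abgroup_op_def)
  then show f0: "f 0 = 0" using assms(2) by simp
  show "f (gmult G n a) = of_nat n * f a"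
    by (induction n) (use assms(2) f0 in \<open>auto simp: algebra_simps\<close>)
qed

lemma rational_ops_one_divisible_by:
  assumes "G \<in> rational_ops" "n > 0" shows "G \<in> one_divisible_by n"
proof -
  obtain f :: "nat \<Rightarrow> rat" where f: "bij f" "\<forall>a b. f (G (a, b)) = f a + f b"
    using assms by (auto simp: rational_ops_def)
  have ab: "is_abgroup_op G" using assms by (simp add: rational_ops_def TFAb_def)
  define b where "b = inv_into UNIV f (f 1 / of_nat n)"
  have "f (gmult G n b) = f 1"
    using f assms(2) by (simp add: b_def additive_rat_gmult[OF ab] bij_is_surj surj_f_inv_f)
  then have "gmult G n b = 1" using bij_is_inj[OF f(1)] by (simp add: inj_eq)
  then show ?thesis by (auto simp: one_divisible_by_def)
qed

lemma rational_ops_commensurable_with_one: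
  assumes "G \<in> rational_ops" shows "G \<in> commensurable_with_one x"
proof -
  obtain f :: "nat \<Rightarrow> rat" where f: "bij f" "\<forall>a b. f (G (a, b)) = f a + f b"
    using assms by (auto simp: rational_ops_def)
  have ab: "is_abgroup_op G" using assms by (simp add: rational_ops_def TFAb_def)
  note f_gmult = additive_rat_gmult[OF ab f(2)]
  have inj: "inj f" using f(1) bij_is_inj by blast
  have f1: "f 1 \<noteq> 0" using inj f_gmult(1) by (metis inj_eq zero_neq_one)
  obtain p s where ps: "quotient_of (f x / f 1) = (p, s)" by (cases "quotient_of (f x / f 1)")
  then have s: "s > 0" and q: "f x / f 1 = of_int p / of_int s"
    using quotient_of_denom_pos quotient_of_div by blast+
  have fx: "of_nat (nat s) * f x = of_int p * f 1" using q s f1 by (simp add: field_simps)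
  have "nat s > 0" using s by simp
  show ?thesis
  proof (cases "p \<ge> 0")
    case True
    then have "f (gmult G (nat s) x) = f (gmult G (nat p) 1)" using fx by (simp add: f_gmult)
    then have "gmult G (nat s) x = gmult G (nat p) 1" using inj by (simp add: inj_eq)
    then show ?thesis using \<open>nat s > 0\<close> unfolding commensurable_with_one_def by blast
  next
    case False
    then have "f (G (gmult G (nat s) x, gmult G (nat (- p)) 1)) = f 0"
      using fx f(2) by (simp add: f_gmult algebra_simps)
    then have "G (gmult G (nat s) x, gmult G (nat (- p)) 1) = 0" using inj by (simp add: inj_eq)
    then show ?thesis using \<open>nat s > 0\<close> unfolding commensurable_with_one_def by blast
  qed
qed

lemma rational_opsI:
  assumes G: "G \<in> TFAb"
    and div: "\<And>n. n > 0 \<Longrightarrow> G \<in> one_divisible_by n"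
    and comm: "\<And>x. G \<in> commensurable_with_one x"
  shows "G \<in> rational_ops"
proof -
  have ab: "is_abgroup_op G" using G by (simp add: TFAb_def)
  interpret torsion_free_comm_group "op_group G" using torsion_free_op_group[OF G] .
  interpret rational_group "op_group G" 1
  proof
    show "\<exists>y\<in>carrier (op_group G). y [^]\<^bsub>op_group G\<^esub> n = (1::nat)" if "n > 0" for n :: nat
      using div[OF that] by (auto simp: one_divisible_by_def gmult_eq_pow[OF ab] op_group_simps)
    fix x :: nat
    obtain n m where n: "n > 0" and nm: "gmult G n x = gmult G m 1 \<or> G (gmult G n x, gmult G m 1) = 0"
      using comm[of x] by (auto simp: commensurable_with_one_def)
    have "x [^]\<^bsub>op_group G\<^esub> int n = (1::nat) [^]\<^bsub>op_group G\<^esub> int m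
      \<or> x [^]\<^bsub>op_group G\<^esub> int n = (1::nat) [^]\<^bsub>op_group G\<^esub> (- int m)"
    proof (cases "gmult G n x = gmult G m 1")
      case True
      then show ?thesis by (simp add: gmult_eq_pow[OF ab] int_pow_int)
    next
      case False
      then have "x [^]\<^bsub>op_group G\<^esub> n \<otimes>\<^bsub>op_group G\<^esub> (1::nat) [^]\<^bsub>op_group G\<^esub> m = \<one>\<^bsub>op_group G\<^esub>"
        using nm by (simp add: gmult_eq_pow[OF ab] op_group_simps)
      then have "inv\<^bsub>op_group G\<^esub> ((1::nat) [^]\<^bsub>op_group G\<^esub> m) = x [^]\<^bsub>op_group G\<^esub> n"
        by (intro inv_equality) (simp_all add: m_comm op_group_simps)
      then show ?thesis by (simp add: int_pow_int int_pow_neg_int op_group_simps)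
    qed
    then show "\<exists>n::nat. n > 0 \<and> (\<exists>k::int. x [^]\<^bsub>op_group G\<^esub> int n = (1::nat) [^]\<^bsub>op_group G\<^esub> k)"
      using n by blast
  qed (simp_all add: op_group_simps)
  have "bij coord" using bij_betw_coord by (simp add: op_group_simps)
  moreover have "coord (G (a, b)) = coord a + coord b" for a b
    using coord_mult[of a b] by (simp add: op_group_simps)
  ultimately show ?thesis using G by (auto simp: rational_ops_def)
qed

lemma rational_ops_eq:
  "rational_ops = TFAb \<inter> (\<Inter>n. one_divisible_by (Suc n)) \<inter> (\<Inter>x. commensurable_with_one x)"
proof (intro equalityI subsetI)
  fix G assume "G \<in> TFAb \<inter> (\<Inter>n. one_divisible_by (Suc n)) \<inter> (\<Inter>x. commensurable_with_one x)"
  then show "G \<in> rational_ops" by (intro rational_opsI) (auto simp: gr0_conv_Suc)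
next
  fix G assume "G \<in> rational_ops"
  moreover have "G \<in> TFAb" using \<open>G \<in> rational_ops\<close> by (simp add: rational_ops_def)
  ultimately show "G \<in> TFAb \<inter> (\<Inter>n. one_divisible_by (Suc n)) \<inter> (\<Inter>x. commensurable_with_one x)"
    by (simp add: rational_ops_one_divisible_by rational_ops_commensurable_with_one)
qed

section \<open>Density of the operations isomorphic to the rationals\<close>

definition cylinder :: "(nat \<times> nat) set \<Rightarrow> binop \<Rightarrow> binop set" where
  "cylinder K G = {H. \<forall>p\<in>K. H p = G p}"

lemma self_in_cylinder: "G \<in> cylinder K G"
  by (simp add: cylinder_def)

lemma open_cylinder: "finite K \<Longrightarrow> open (cylinder K G)"
proof -
  assume "finite K"
  then have "open {H. \<forall>p\<in>K. H (id p) \<in> {G p}}"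
    by (rule product_topology_basis') (auto intro: open_discrete)
  then show ?thesis by (simp add: cylinder_def)
qed

lemma open_contains_cylinder:
  assumes "open U" "G \<in> U"
  shows "\<exists>K. finite K \<and> cylinder K G \<subseteq> U"
proof -
  have "openin (product_topology (\<lambda>_. euclidean) UNIV) U" using assms(1) by (simp add: open_fun_def)
  from product_topology_open_contains_basis[OF this assms(2)]
  obtain X where X: "G \<in> (\<Pi>\<^sub>E p\<in>UNIV. X p)" "finite {p. X p \<noteq> UNIV}" "(\<Pi>\<^sub>E p\<in>UNIV. X p) \<subseteq> U"
    by auto
  have "cylinder {p. X p \<noteq> UNIV} G \<subseteq> (\<Pi>\<^sub>E p\<in>UNIV. X p)"
    using X(1) by (auto simp: cylinder_def PiE_iff) (metis UNIV_I)
  with X show ?thesis by blast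
qed

lemma gmult_eq_if_agree:
  "(\<And>k. k < n \<Longrightarrow> H (b, gmult G k b) = G (b, gmult G k b)) \<Longrightarrow> gmult H n b = gmult G n b"
  by (induction n) auto

lemma open_one_divisible_by: "open (one_divisible_by n)"
proof (subst open_subopen, intro ballI)
  fix G assume "G \<in> one_divisible_by n"
  then obtain b where b: "gmult G n b = 1" by (auto simp: one_divisible_by_def)
  define K where "K = (\<lambda>k. (b, gmult G k b)) ` {..<n}"
  have "cylinder K G \<subseteq> one_divisible_by n"
  proof
    fix H assume "H \<in> cylinder K G"
    then have "gmult H n b = gmult G n b"
      by (intro gmult_eq_if_agree) (auto simp: cylinder_def K_def)
    then show "H \<in> one_divisible_by n" using b by (auto simp: one_divisible_by_def)
  qed
  moreover have "open (cylinder K G)" by (rule open_cylinder) (simp add: K_def)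
  ultimately show "\<exists>T. open T \<and> G \<in> T \<and> T \<subseteq> one_divisible_by n"
    using self_in_cylinder by blast
qed

lemma open_commensurable_with_one: "open (commensurable_with_one x)"
proof (subst open_subopen, intro ballI)
  fix G assume "G \<in> commensurable_with_one x"
  then obtain n m where n: "n > 0"
    and nm: "gmult G n x = gmult G m 1 \<or> G (gmult G n x, gmult G m 1) = 0"
    by (auto simp: commensurable_with_one_def)
  define K where "K = (\<lambda>k. (x, gmult G k x)) ` {..<n} \<union> (\<lambda>k. (1, gmult G k 1)) ` {..<m}
      \<union> {(gmult G n x, gmult G m 1)}"
  have "cylinder K G \<subseteq> commensurable_with_one x"
  proof
    fix H assume H: "H \<in> cylinder K G"
    have "gmult H n x = gmult G n x" "gmult H m 1 = gmult G m 1"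
      using H by (intro gmult_eq_if_agree; auto simp: cylinder_def K_def)+
    moreover have "H (gmult G n x, gmult G m 1) = G (gmult G n x, gmult G m 1)"
      using H by (auto simp: cylinder_def K_def)
    ultimately have "gmult H n x = gmult H m 1 \<or> H (gmult H n x, gmult H m 1) = 0"
      using nm by simp
    then show "H \<in> commensurable_with_one x" using n unfolding commensurable_with_one_def by blast
  qed
  moreover have "open (cylinder K G)" by (rule open_cylinder) (simp add: K_def)
  ultimately show "\<exists>T. open T \<and> G \<in> T \<and> T \<subseteq> commensurable_with_one x"
    using self_in_cylinder by blast
qed

lemma ex_bij_extending:
  fixes g :: "'a::countable \<Rightarrow> 'b::countable"
  assumes "infinite (UNIV :: 'a set)" "infinite (UNIV :: 'b set)" "finite S" "inj_on g S"
  shows "\<exists>\<phi>. bij \<phi> \<and> (\<forall>x\<in>S. \<phi> x = g x)"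
proof -
  define A where "A = UNIV - S"
  define B where "B = UNIV - g ` S"
  have "infinite A" "infinite B" using assms(1-3) by (simp_all add: A_def B_def Diff_infinite_finite)
  then have h: "bij_betw (from_nat_into B \<circ> to_nat_on A) A B"
    by (intro bij_betw_trans[OF to_nat_on_infinite bij_betw_from_nat_into]) simp_all
  define \<phi> where "\<phi> x = (if x \<in> S then g x else (from_nat_into B \<circ> to_nat_on A) x)" for x
  have "bij_betw \<phi> S (g ` S)"
    using inj_on_imp_bij_betw[OF assms(4)] by (rule bij_betw_cong[THEN iffD1, rotated]) (simp add: \<phi>_def)
  moreover have "bij_betw \<phi> A B"
    using h by (rule bij_betw_cong[THEN iffD1, rotated]) (simp add: \<phi>_def A_def)
  ultimately have "bij_betw \<phi> (S \<union> A) (g ` S \<union> B)" by (rule bij_betw_combine) (simp add: B_def)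
  moreover have "S \<union> A = UNIV" "g ` S \<union> B = UNIV" by (auto simp: A_def B_def)
  ultimately show ?thesis by (auto simp: \<phi>_def)
qed

lemma transported_addition_in_rational_ops:
  fixes \<phi> :: "nat \<Rightarrow> rat"
  assumes "bij \<phi>" "\<phi> 0 = 0"
  shows "(\<lambda>(a, b). inv_into UNIV \<phi> (\<phi> a + \<phi> b)) \<in> rational_ops"
proof -
  define H where "H = (\<lambda>(a, b). inv_into UNIV \<phi> (\<phi> a + \<phi> b))"
  have \<phi>H: "\<phi> (H (a, b)) = \<phi> a + \<phi> b" for a b
    using assms(1) by (simp add: H_def bij_is_surj surj_f_inv_f)
  have eq_iff: "x = y \<longleftrightarrow> \<phi> x = \<phi> y" for x y
    using assms(1) by (simp add: bij_is_inj inj_eq)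
  have "is_abgroup_op H"
    unfolding is_abgroup_op_def
  proof (intro conjI allI)
    fix a b c
    show "H (H (a, b), c) = H (a, H (b, c))" by (subst eq_iff) (simp add: \<phi>H add.assoc)
    show "H (a, b) = H (b, a)" by (subst eq_iff) (simp add: \<phi>H add.commute)
    show "H (0, a) = a" by (subst eq_iff) (simp add: \<phi>H assms(2))
    show "\<exists>b. H (a, b) = 0"
      by (rule exI[of _ "inv_into UNIV \<phi> (- \<phi> a)"], subst eq_iff)
        (simp add: \<phi>H assms bij_is_surj surj_f_inv_f)
  qed
  moreover have "torsion_free_op H"
  proof -
    have \<phi>_gmult: "\<phi> (gmult H n a) = of_nat n * \<phi> a" for n a
      by (induction n) (simp_all add: \<phi>H assms(2) algebra_simps)
    show ?thesis unfolding torsion_free_op_def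
    proof (intro allI impI)
      fix a n :: nat assume "a \<noteq> 0 \<and> n > 0"
      then have "\<phi> (gmult H n a) \<noteq> 0" using eq_iff[of a 0] assms(2) by (simp add: \<phi>_gmult)
      then show "gmult H n a \<noteq> 0" using assms(2) by metis
    qed
  qed
  ultimately show ?thesis using \<phi>H assms(1) by (auto simp: rational_ops_def TFAb_def H_def)
qed

lemma rational_ops_meets_cylinder:
  assumes G: "G \<in> TFAb" and K: "finite K"
  shows "\<exists>H\<in>rational_ops. H \<in> cylinder K G"
proof -
  interpret torsion_free_comm_group "op_group G" using torsion_free_op_group[OF G] .
  define S where "S = insert 0 (fst ` K \<union> snd ` K \<union> G ` K)"
  have "finite S" using K by (simp add: S_def)
  then obtain g :: "nat \<Rightarrow> rat" where g: "inj_on g S" "\<And>x y. \<lbrakk>x \<in> S; y \<in> S; G (x, y) \<in> S\<rbrakk> \<Longrightarrow> g (G (x, y)) = g x + g y"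
    using ex_rat_partial_embedding[of S] by (auto simp: op_group_simps)
  have KS: "x \<in> S" "y \<in> S" "G (x, y) \<in> S" if "(x, y) \<in> K" for x y
    using that by (force simp: S_def)+
  have "G (0, 0) = 0" using G by (simp add: TFAb_def is_abgroup_op_def)
  then have "g 0 = 0" using g(2)[of 0 0] by (simp add: S_def)
  obtain \<phi> :: "nat \<Rightarrow> rat" where \<phi>: "bij \<phi>" "\<And>x. x \<in> S \<Longrightarrow> \<phi> x = g x"
    using ex_bij_extending[OF infinite_UNIV_nat infinite_UNIV_char_0 \<open>finite S\<close> g(1)] by blast
  define H where "H = (\<lambda>(a, b). inv_into UNIV \<phi> (\<phi> a + \<phi> b))"
  have "H \<in> rational_ops"
    unfolding H_def using \<phi> \<open>g 0 = 0\<close> by (intro transported_addition_in_rational_ops) (simp_all add: S_def)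
  moreover have "H p = G p" if "p \<in> K" for p
  proof -
    obtain x y where p: "p = (x, y)" by (cases p)
    have "\<phi> (H p) = \<phi> (G p)"
      using \<phi> KS[OF that[unfolded p]] g(2) by (simp add: p H_def bij_is_surj surj_f_inv_f)
    then show ?thesis using \<phi>(1) by (simp add: bij_is_inj inj_eq)
  qed
  ultimately show ?thesis unfolding cylinder_def by blast
qed

lemma closure_rational_ops: "top_of_set TFAb closure_of rational_ops = TFAb"
proof
  show "top_of_set TFAb closure_of rational_ops \<subseteq> TFAb"
    using closure_of_subset_topspace by fastforce
  show "TFAb \<subseteq> top_of_set TFAb closure_of rational_ops"
  proof
    fix G assume G: "G \<in> TFAb"
    have "\<exists>H\<in>rational_ops. H \<in> T" if "G \<in> T" "openin (top_of_set TFAb) T" for T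
    proof -
      obtain U where U: "open U" "T = TFAb \<inter> U" using \<open>openin _ T\<close> by (auto simp: openin_open)
      obtain K where K: "finite K" "cylinder K G \<subseteq> U"
        using open_contains_cylinder[OF U(1)] U(2) \<open>G \<in> T\<close> by blast
      obtain H where "H \<in> rational_ops" "H \<in> cylinder K G"
        using rational_ops_meets_cylinder[OF G K(1)] by blast
      then show ?thesis using K(2) U(2) by (auto simp: rational_ops_def)
    qed
    then show "G \<in> top_of_set TFAb closure_of rational_ops" using G by (auto simp: in_closure_of)
  qed
qed

lemma nowhere_dense_in_complement_dense_open:
  assumes "openin X W" "X closure_of W = topspace X" "A \<subseteq> topspace X - W"
  shows "nowhere_dense_in X A"
proof -
  have "X closure_of A \<subseteq> topspace X - W"
    using assms(1,3) by (intro closure_of_minimal) auto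
  then have "X interior_of (X closure_of A) \<subseteq> X interior_of (topspace X - W)"
    by (rule interior_of_mono)
  also have "\<dots> = {}" using assms(2) by (simp add: interior_of_complement)
  finally show ?thesis by (simp add: nowhere_dense_in_def)
qed

lemma nowhere_dense_outside_open_superset:
  assumes "open W" "rational_ops \<subseteq> W"
  shows "nowhere_dense_in (top_of_set TFAb) (TFAb - W)"
proof (rule nowhere_dense_in_complement_dense_open)
  show "openin (top_of_set TFAb) (TFAb \<inter> W)" using assms(1) by blast
  have "rational_ops \<subseteq> TFAb \<inter> W" using assms(2) by (auto simp: rational_ops_def)
  then have "TFAb \<subseteq> top_of_set TFAb closure_of (TFAb \<inter> W)"
    using closure_of_mono closure_rational_ops by blast
  then show "top_of_set TFAb closure_of (TFAb \<inter> W) = topspace (top_of_set TFAb)"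
    using closure_of_subset_topspace[of "top_of_set TFAb" "TFAb \<inter> W"] by auto
qed (use assms in auto)

theorem theorem4p4:
  shows "comeager_in (top_of_set TFAb)
     {G \<in> TFAb. \<exists>f :: nat \<Rightarrow> rat. bij f \<and> (\<forall>a b. f (G (a, b)) = f a + f b)}"
proof -
  define F where "F = range (\<lambda>n. TFAb - one_divisible_by (Suc n))
    \<union> range (\<lambda>x. TFAb - commensurable_with_one x)"
  have "countable F" by (simp add: F_def)
  moreover have "nowhere_dense_in (top_of_set TFAb) S" if "S \<in> F" for S
    using that unfolding F_def
    by (auto intro: nowhere_dense_outside_open_superset open_one_divisible_by
        open_commensurable_with_one rational_ops_one_divisible_by rational_ops_commensurable_with_one)
  moreover have "TFAb - rational_ops = \<Union>F"
    unfolding rational_ops_eq F_def by blast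
  ultimately show ?thesis unfolding comeager_in_def rational_ops_def by auto
qed

end
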